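(* Let $G$ be a signed digraph on $[n]$. If no vertex of $G$ has exactly one unsigned in-neighbor, or if every vertex of $G$ has at least one unsigned in-neighbor, then $G$ admits a nilpotent function $f:\{0,1,2\}^n\to\{0,1,2\}^n$ of class at most $2$.
   Context: A signed digraph is a digraph (loops allowed, no multiple arcs) in which each arc is labeled positive, negative, or null (unsigned). An unsigned in-neighbor of $i$ is a vertex $j$ such that $(j,i)$ is an unsigned (null) arc. For a finite interval of integers $A$, a function over $A$ is a map $f:A^n\to A^n$; $f^0=\mathrm{id}$, $f^k=f\circ f^{k-1}$. The interaction graph $G(f)$ is the signed digraph on $[n]$ with an arc $(j,i)$ iff $f_i(a)\neq f_i(b)$ for some $a,b\in A^n$ with $a_j<b_j$ and $a_\ell=b_\ell$ for $\ell\neq j$; the arc is positive if $f_i(a)\leq f_i(b)$ for all such pairs, negative if $f_i(a)\geq f_i(b)$ for all such pairs, and null otherwise. $G$ admits $f$ if $G(f)=G$. $f$ is nilpotent if $f^k$ is constant for some $k\geq 0$; the least such $k$ is its class. *)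

theory Defs
  imports Main
begin

text \<open>Vertices are 0..<n (representing [n]). The alphabet is the interval
{0..<q} (for the theorem q = 3, i.e. {0,1,2}). A configuration in A^n is a
function x :: nat \<Rightarrow> nat with x i < q for i < n and x i = 0 for i \<ge> n.\<close>

definition cfg :: "nat \<Rightarrow> nat \<Rightarrow> (nat \<Rightarrow> nat) set" where
  "cfg q n = {x. (\<forall>i<n. x i < q) \<and> (\<forall>i\<ge>n. x i = 0)}"

datatype sign = Pos | Neg | Unsigned

text \<open>A signed digraph on [n]: G (j,i) = Some s iff there is an arc (j,i) with label s.\<close>
definition signed_digraph_on :: "nat \<Rightarrow> (nat \<times> nat \<Rightarrow> sign option) \<Rightarrow> bool" where
  "signed_digraph_on n G \<longleftrightarrow> (\<forall>j i. G (j,i) \<noteq> None \<longrightarrow> j < n \<and> i < n)"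

definition unsigned_in_neighbors :: "(nat \<times> nat \<Rightarrow> sign option) \<Rightarrow> nat \<Rightarrow> nat set" where
  "unsigned_in_neighbors G i = {j. G (j,i) = Some Unsigned}"

definition jpair :: "nat \<Rightarrow> nat \<Rightarrow> nat \<Rightarrow> (nat \<Rightarrow> nat) \<Rightarrow> (nat \<Rightarrow> nat) \<Rightarrow> bool" where
  "jpair q n j a b \<longleftrightarrow> a \<in> cfg q n \<and> b \<in> cfg q n \<and> a j < b j \<and> (\<forall>l. l \<noteq> j \<longrightarrow> a l = b l)"

definition interaction_graph ::
  "nat \<Rightarrow> nat \<Rightarrow> ((nat \<Rightarrow> nat) \<Rightarrow> (nat \<Rightarrow> nat)) \<Rightarrow> (nat \<times> nat \<Rightarrow> sign option)" where
  "interaction_graph q n f = (\<lambda>(j,i).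
     if j < n \<and> i < n \<and> (\<exists>a b. jpair q n j a b \<and> f a i \<noteq> f b i)
     then Some (if \<forall>a b. jpair q n j a b \<longrightarrow> f a i \<le> f b i then Pos
                else if \<forall>a b. jpair q n j a b \<longrightarrow> f a i \<ge> f b i then Neg
                else Unsigned)
     else None)"

definition is_function_over :: "nat \<Rightarrow> nat \<Rightarrow> ((nat \<Rightarrow> nat) \<Rightarrow> (nat \<Rightarrow> nat)) \<Rightarrow> bool" where
  "is_function_over q n f \<longleftrightarrow> (\<forall>x \<in> cfg q n. f x \<in> cfg q n)"

definition iterate_constant :: "nat \<Rightarrow> nat \<Rightarrow> ((nat \<Rightarrow> nat) \<Rightarrow> (nat \<Rightarrow> nat)) \<Rightarrow> nat \<Rightarrow> bool" where
  "iterate_constant q n f k \<longleftrightarrow> (\<exists>c. \<forall>x \<in> cfg q n. (f ^^ k) x = c)"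

definition nilpotent_class_le :: "nat \<Rightarrow> nat \<Rightarrow> ((nat \<Rightarrow> nat) \<Rightarrow> (nat \<Rightarrow> nat)) \<Rightarrow> nat \<Rightarrow> bool" where
  "nilpotent_class_le q n f m \<longleftrightarrow> (\<exists>k \<le> m. iterate_constant q n f k)"

end

theory Submission
  imports Defs
begin

text \<open>All local functions are Boolean: \<open>f\<^sub>i(x) = c\<close> if \<open>x\<close> satisfies a test \<open>P\<^sub>i\<close> and \<open>0\<close>
otherwise, so the sign of the arc \<open>(j,i)\<close> only records whether \<open>P\<^sub>i\<close> is increasing and/or
decreasing in \<open>x\<^sub>j\<close>.

If every vertex has an unsigned in-neighbour, \<open>P\<^sub>i\<close> asks positive in-neighbours to be 2,
negative ones to be 0 and unsigned ones to be 1, and \<open>c = 2\<close>. The image of \<open>f\<close> avoids the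
value 1, so each test fails at its unsigned in-neighbour and \<open>f\<^sup>2 = 0\<close>.

If no vertex has exactly one unsigned in-neighbour, \<open>P\<^sub>i\<close> asks positive in-neighbours to be 2,
negative ones not to be 2, and exactly one unsigned in-neighbour (if any) to be 2, and \<open>c = 1\<close>.
With at least two unsigned in-neighbours, raising one of them to 2 can both create and destroy
the unique 2, which makes those arcs unsigned. The tests only see which coordinates equal 2 and
the image of \<open>f\<close> has none, so \<open>f\<^sup>2\<close> is the constant \<open>f(0)\<close>.\<close>

definition increasing_in :: "nat \<Rightarrow> nat \<Rightarrow> nat \<Rightarrow> ((nat \<Rightarrow> nat) \<Rightarrow> bool) \<Rightarrow> bool" where
  "increasing_in q n j P \<longleftrightarrow> (\<forall>a b. jpair q n j a b \<longrightarrow> P a \<longrightarrow> P b)"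

definition decreasing_in :: "nat \<Rightarrow> nat \<Rightarrow> nat \<Rightarrow> ((nat \<Rightarrow> nat) \<Rightarrow> bool) \<Rightarrow> bool" where
  "decreasing_in q n j P \<longleftrightarrow> (\<forall>a b. jpair q n j a b \<longrightarrow> P b \<longrightarrow> P a)"

definition arc_sign :: "bool \<Rightarrow> bool \<Rightarrow> sign option" where
  "arc_sign inc dec =
     (if inc then (if dec then None else Some Pos)
      else if dec then Some Neg else Some Unsigned)"

definition indicator_map :: "nat \<Rightarrow> nat \<Rightarrow> (nat \<Rightarrow> (nat \<Rightarrow> nat) \<Rightarrow> bool) \<Rightarrow> (nat \<Rightarrow> nat) \<Rightarrow> nat \<Rightarrow> nat" where
  "indicator_map n c P x = (\<lambda>i. if i < n \<and> P i x then c else 0)"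

lemma jpair_bounds:
  assumes "jpair q n j a b"
  shows "j < n" "b j < q"
proof -
  show "j < n"
  proof (rule ccontr)
    assume "\<not> j < n"
    then have "b j = 0" using assms by (simp add: jpair_def cfg_def)
    then show False using assms by (simp add: jpair_def)
  qed
  then show "b j < q" using assms by (simp add: jpair_def cfg_def)
qed

lemma jpair_fun_upd_eq: "jpair q n j a b \<Longrightarrow> b(j := a j) = a"
  by (auto simp: jpair_def)

lemma cfg_fun_upd: "x \<in> cfg q n \<Longrightarrow> j < n \<Longrightarrow> t < q \<Longrightarrow> x(j := t) \<in> cfg q n"
  by (auto simp: cfg_def)

lemma jpair_fun_upd:
  "x \<in> cfg q n \<Longrightarrow> j < n \<Longrightarrow> s < t \<Longrightarrow> t < q \<Longrightarrow> jpair q n j (x(j := s)) (x(j := t))"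
  by (simp add: jpair_def cfg_fun_upd)

lemma increasing_inI:
  assumes "\<And>x s t. s < t \<Longrightarrow> t < q \<Longrightarrow> P (x(j := s)) \<Longrightarrow> P (x(j := t))"
  shows "increasing_in q n j P"
  unfolding increasing_in_def
proof (intro allI impI)
  fix a b assume ab: "jpair q n j a b" "P a"
  then have "P (b(j := a j))" by (simp add: jpair_fun_upd_eq)
  with assms[of "a j" "b j" b] ab(1) jpair_bounds(2) have "P (b(j := b j))"
    by (simp add: jpair_def)
  then show "P b" by simp
qed

lemma decreasing_inI:
  assumes "\<And>x s t. s < t \<Longrightarrow> t < q \<Longrightarrow> P (x(j := t)) \<Longrightarrow> P (x(j := s))"
  shows "decreasing_in q n j P"
  unfolding decreasing_in_def
proof (intro allI impI)
  fix a b assume ab: "jpair q n j a b" "P b"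
  with assms[of "a j" "b j" b] jpair_bounds(2) have "P (b(j := a j))"
    by (simp add: jpair_def)
  then show "P a" using ab(1) by (simp add: jpair_fun_upd_eq)
qed

lemma not_increasing_inI:
  "x \<in> cfg q n \<Longrightarrow> j < n \<Longrightarrow> s < t \<Longrightarrow> t < q \<Longrightarrow> P (x(j := s)) \<Longrightarrow> \<not> P (x(j := t))
   \<Longrightarrow> \<not> increasing_in q n j P"
  unfolding increasing_in_def using jpair_fun_upd by blast

lemma not_decreasing_inI:
  "x \<in> cfg q n \<Longrightarrow> j < n \<Longrightarrow> s < t \<Longrightarrow> t < q \<Longrightarrow> P (x(j := t)) \<Longrightarrow> \<not> P (x(j := s))
   \<Longrightarrow> \<not> decreasing_in q n j P"
  unfolding decreasing_in_def using jpair_fun_upd by blast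

lemma indicator_map_function_over: "c < q \<Longrightarrow> is_function_over q n (indicator_map n c P)"
  by (simp add: is_function_over_def indicator_map_def cfg_def)

lemma interaction_graph_indicator_map:
  assumes "0 < c" "i < n"
  shows "interaction_graph q n (indicator_map n c P) (j, i)
           = arc_sign (increasing_in q n j (P i)) (decreasing_in q n j (P i))"
proof -
  let ?f = "indicator_map n c P"
  have le: "?f a i \<le> ?f b i \<longleftrightarrow> (P i a \<longrightarrow> P i b)" for a b
    using assms by (simp add: indicator_map_def)
  have neq: "?f a i \<noteq> ?f b i \<longleftrightarrow> P i a \<noteq> P i b" for a b
    using assms by (simp add: indicator_map_def)
  have depends: "(\<exists>a b. jpair q n j a b \<and> ?f a i \<noteq> ?f b i)
                   \<longleftrightarrow> \<not> (increasing_in q n j (P i) \<and> decreasing_in q n j (P i))"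
    unfolding neq increasing_in_def decreasing_in_def by blast
  have inc: "(\<forall>a b. jpair q n j a b \<longrightarrow> ?f a i \<le> ?f b i) \<longleftrightarrow> increasing_in q n j (P i)"
    unfolding le increasing_in_def ..
  have dec: "(\<forall>a b. jpair q n j a b \<longrightarrow> ?f b i \<le> ?f a i) \<longleftrightarrow> decreasing_in q n j (P i)"
    unfolding le decreasing_in_def ..
  have "j < n" if "\<not> (increasing_in q n j (P i) \<and> decreasing_in q n j (P i))"
    using that jpair_bounds(1) unfolding increasing_in_def decreasing_in_def by blast
  with assms(2) show ?thesis
    by (simp only: interaction_graph_def prod.case depends inc dec) (auto simp: arc_sign_def)
qed

lemma interaction_graph_indicator_map_eqI:
  assumes "signed_digraph_on n G" "0 < c"
    and "\<And>i j. i < n \<Longrightarrow> arc_sign (increasing_in q n j (P i)) (decreasing_in q n j (P i)) = G (j, i)"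
  shows "interaction_graph q n (indicator_map n c P) = G"
proof (rule ext, clarify)
  fix j i
  show "interaction_graph q n (indicator_map n c P) (j, i) = G (j, i)"
  proof (cases "i < n")
    case True
    then show ?thesis using assms by (simp add: interaction_graph_indicator_map)
  next
    case False
    then have "G (j, i) = None" using assms(1) unfolding signed_digraph_on_def by blast
    with False show ?thesis by (simp add: interaction_graph_def)
  qed
qed

lemma indicator_map_cong:
  assumes "\<And>i. i < n \<Longrightarrow> P i x = P i y"
  shows "indicator_map n c P x = indicator_map n c P y"
  unfolding indicator_map_def using assms by (intro ext) (simp cong: conj_cong)

lemma indicator_map_neq: "v \<noteq> c \<Longrightarrow> v \<noteq> 0 \<Longrightarrow> indicator_map n c P x k \<noteq> v"
  by (simp add: indicator_map_def)

lemma nilpotent_class_le_2I: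
  "(\<And>x. x \<in> cfg q n \<Longrightarrow> f (f x) = c) \<Longrightarrow> nilpotent_class_le q n f 2"
  unfolding nilpotent_class_le_def iterate_constant_def by (auto simp: numeral_2_eq_2)

section \<open>Every vertex has an unsigned in-neighbour\<close>

fun sign_value :: "sign \<Rightarrow> nat" where
  "sign_value Pos = 2"
| "sign_value Neg = 0"
| "sign_value Unsigned = 1"

definition matches_signs :: "(nat \<times> nat \<Rightarrow> sign option) \<Rightarrow> nat \<Rightarrow> (nat \<Rightarrow> nat) \<Rightarrow> bool" where
  "matches_signs G i x \<longleftrightarrow> (\<forall>k s. G (k, i) = Some s \<longrightarrow> x k = sign_value s)"

definition sign_value_cfg :: "nat \<Rightarrow> (nat \<times> nat \<Rightarrow> sign option) \<Rightarrow> nat \<Rightarrow> nat \<Rightarrow> nat" where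
  "sign_value_cfg n G i k =
     (if k < n then (case G (k, i) of None \<Rightarrow> 0 | Some s \<Rightarrow> sign_value s) else 0)"

lemma sign_value_less_3: "sign_value s < 3"
  by (cases s) simp_all

lemma sign_value_cfg_in_cfg: "sign_value_cfg n G i \<in> cfg 3 n"
  by (simp add: cfg_def sign_value_cfg_def sign_value_less_3 split: option.split)

lemma matches_signs_fun_upd_sign_value_cfg:
  assumes "signed_digraph_on n G" "G (j, i) = Some s"
  shows "matches_signs G i ((sign_value_cfg n G i)(j := t)) \<longleftrightarrow> t = sign_value s"
  using assms by (fastforce simp: matches_signs_def sign_value_cfg_def signed_digraph_on_def)

lemma arc_sign_matches_signs:
  assumes "signed_digraph_on n G"
  shows "arc_sign (increasing_in 3 n j (matches_signs G i)) (decreasing_in 3 n j (matches_signs G i))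
           = G (j, i)"
proof (cases "G (j, i)")
  case None
  then have "matches_signs G i (x(j := t)) = matches_signs G i x" for x t
    by (force simp: matches_signs_def)
  then have "increasing_in 3 n j (matches_signs G i)" "decreasing_in 3 n j (matches_signs G i)"
    by (auto intro!: increasing_inI decreasing_inI)
  with None show ?thesis by (simp add: arc_sign_def)
next
  case (Some s)
  with assms have j: "j < n" by (auto simp: signed_digraph_on_def)
  let ?x = "sign_value_cfg n G i"
  have at_j: "matches_signs G i (?x(j := t)) \<longleftrightarrow> t = sign_value s" for t
    using matches_signs_fun_upd_sign_value_cfg[OF assms Some] .
  have forced: "matches_signs G i (x(j := t)) \<Longrightarrow> t = sign_value s" for x t
    using Some by (force simp: matches_signs_def)
  show ?thesis
  proof (cases s)
    case Pos
    have "increasing_in 3 n j (matches_signs G i)"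
      by (rule increasing_inI) (use forced Pos in fastforce)
    moreover have "\<not> decreasing_in 3 n j (matches_signs G i)"
      by (rule not_decreasing_inI[OF sign_value_cfg_in_cfg[of n G i] j, of 0 2]) (simp_all add: at_j Pos)
    ultimately show ?thesis using Some Pos by (simp add: arc_sign_def)
  next
    case Neg
    have "decreasing_in 3 n j (matches_signs G i)"
      by (rule decreasing_inI) (use forced Neg in fastforce)
    moreover have "\<not> increasing_in 3 n j (matches_signs G i)"
      by (rule not_increasing_inI[OF sign_value_cfg_in_cfg[of n G i] j, of 0 2]) (simp_all add: at_j Neg)
    ultimately show ?thesis using Some Neg by (simp add: arc_sign_def)
  next
    case Unsigned
    have "\<not> increasing_in 3 n j (matches_signs G i)"
      by (rule not_increasing_inI[OF sign_value_cfg_in_cfg[of n G i] j, of 1 2]) (simp_all add: at_j Unsigned)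
    moreover have "\<not> decreasing_in 3 n j (matches_signs G i)"
      by (rule not_decreasing_inI[OF sign_value_cfg_in_cfg[of n G i] j, of 0 1]) (simp_all add: at_j Unsigned)
    ultimately show ?thesis using Some Unsigned by (simp add: arc_sign_def)
  qed
qed

lemma nilpotent_network_if_unsigned_in_neighbors:
  assumes G: "signed_digraph_on n G"
    and unsigned: "\<forall>i<n. unsigned_in_neighbors G i \<noteq> {}"
  shows "\<exists>f. is_function_over 3 n f \<and> interaction_graph 3 n f = G \<and> nilpotent_class_le 3 n f 2"
proof (intro exI conjI)
  let ?f = "indicator_map n 2 (matches_signs G)"
  show "is_function_over 3 n ?f"
    by (simp add: indicator_map_function_over)
  show "interaction_graph 3 n ?f = G"
    by (simp add: interaction_graph_indicator_map_eqI[OF G] arc_sign_matches_signs[OF G])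
  have "?f (?f x) = (\<lambda>_. 0)" for x
  proof -
    have "\<not> matches_signs G i (?f x)" if "i < n" for i
    proof -
      from unsigned that obtain u where u: "G (u, i) = Some Unsigned"
        by (auto simp: unsigned_in_neighbors_def)
      have "?f x u \<noteq> sign_value Unsigned" by (simp add: indicator_map_neq)
      with u show ?thesis unfolding matches_signs_def by blast
    qed
    then show ?thesis by (auto simp: indicator_map_def[of n 2 _ "?f x"])
  qed
  then show "nilpotent_class_le 3 n ?f 2"
    by (rule nilpotent_class_le_2I)
qed

section \<open>No vertex has exactly one unsigned in-neighbour\<close>

definition one_unsigned_two :: "(nat \<times> nat \<Rightarrow> sign option) \<Rightarrow> nat \<Rightarrow> (nat \<Rightarrow> nat) \<Rightarrow> bool" where
  "one_unsigned_two G i x \<longleftrightarrow>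
     (\<forall>k. G (k, i) = Some Pos \<longrightarrow> x k = 2) \<and> (\<forall>k. G (k, i) = Some Neg \<longrightarrow> x k \<noteq> 2) \<and>
     (unsigned_in_neighbors G i = {} \<or> card {u \<in> unsigned_in_neighbors G i. x u = 2} = 1)"

definition two_marked :: "nat \<Rightarrow> (nat \<times> nat \<Rightarrow> sign option) \<Rightarrow> nat \<Rightarrow> nat set \<Rightarrow> nat \<Rightarrow> nat" where
  "two_marked n G i X k = (if k < n \<and> (G (k, i) = Some Pos \<or> k \<in> X) then 2 else 0)"

lemma unsigned_in_neighbors_less:
  "signed_digraph_on n G \<Longrightarrow> u \<in> unsigned_in_neighbors G i \<Longrightarrow> u < n"
  by (auto simp: signed_digraph_on_def unsigned_in_neighbors_def)

lemma two_marked_in_cfg: "two_marked n G i X \<in> cfg 3 n"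
  by (simp add: cfg_def two_marked_def)

lemma two_marked_fun_upd_two:
  "signed_digraph_on n G \<Longrightarrow> j \<in> unsigned_in_neighbors G i
   \<Longrightarrow> (two_marked n G i X)(j := 2) = two_marked n G i (insert j X)"
  by (rule ext) (auto simp: two_marked_def dest: unsigned_in_neighbors_less)

lemma two_marked_fun_upd_zero:
  "j \<notin> X \<Longrightarrow> G (j, i) \<noteq> Some Pos \<Longrightarrow> (two_marked n G i X)(j := 0) = two_marked n G i X"
  by (rule ext) (simp add: two_marked_def)

lemma one_unsigned_two_two_marked:
  assumes G: "signed_digraph_on n G" and X: "X \<subseteq> unsigned_in_neighbors G i"
  shows "one_unsigned_two G i (two_marked n G i X) \<longleftrightarrow> unsigned_in_neighbors G i = {} \<or> card X = 1"
proof -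
  have "u \<in> unsigned_in_neighbors G i \<and> two_marked n G i X u = 2 \<longleftrightarrow> u \<in> X" for u
    using X unsigned_in_neighbors_less[OF G, of u i]
    by (auto simp: two_marked_def unsigned_in_neighbors_def)
  then have "{u \<in> unsigned_in_neighbors G i. two_marked n G i X u = 2} = X"
    by blast
  moreover have "two_marked n G i X k \<noteq> 2" if "G (k, i) = Some Neg" for k
    using X that by (auto simp: two_marked_def unsigned_in_neighbors_def)
  moreover have "two_marked n G i X k = 2" if "G (k, i) = Some Pos" for k
    using G that by (auto simp: two_marked_def signed_digraph_on_def)
  ultimately show ?thesis
    unfolding one_unsigned_two_def by (metis option.inject sign.distinct(1))
qed

lemma one_unsigned_two_cong:
  assumes "\<And>k. G (k, i) \<noteq> None \<Longrightarrow> x k = 2 \<longleftrightarrow> y k = 2"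
  shows "one_unsigned_two G i x = one_unsigned_two G i y"
proof -
  have pos: "(\<forall>k. G (k, i) = Some Pos \<longrightarrow> x k = 2) \<longleftrightarrow> (\<forall>k. G (k, i) = Some Pos \<longrightarrow> y k = 2)"
    using assms by auto
  have neg: "(\<forall>k. G (k, i) = Some Neg \<longrightarrow> x k \<noteq> 2) \<longleftrightarrow> (\<forall>k. G (k, i) = Some Neg \<longrightarrow> y k \<noteq> 2)"
    using assms by auto
  have "{u \<in> unsigned_in_neighbors G i. x u = 2} = {u \<in> unsigned_in_neighbors G i. y u = 2}"
    using assms by (auto simp: unsigned_in_neighbors_def)
  with pos neg show ?thesis by (simp only: one_unsigned_two_def)
qed

lemma ex_two_marked_one_unsigned_two:
  assumes "signed_digraph_on n G"
  shows "\<exists>X \<subseteq> unsigned_in_neighbors G i. one_unsigned_two G i (two_marked n G i X)"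
proof (cases "unsigned_in_neighbors G i = {}")
  case True
  then show ?thesis using one_unsigned_two_two_marked[OF assms] by blast
next
  case False
  then obtain u where "u \<in> unsigned_in_neighbors G i" by blast
  then show ?thesis using one_unsigned_two_two_marked[OF assms, of "{u}"] by auto
qed

lemma one_unsigned_two_positive_arc:
  assumes G: "signed_digraph_on n G" and Pos: "G (j, i) = Some Pos"
  shows "increasing_in 3 n j (one_unsigned_two G i) \<and> \<not> decreasing_in 3 n j (one_unsigned_two G i)"
proof
  let ?P = "one_unsigned_two G i"
  from G Pos have j: "j < n" by (auto simp: signed_digraph_on_def)
  obtain X where "?P (two_marked n G i X)"
    using ex_two_marked_one_unsigned_two[OF G] by blast
  moreover have "(two_marked n G i X)(j := 2) = two_marked n G i X"
    using j Pos by (auto simp: two_marked_def)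
  ultimately have "?P ((two_marked n G i X)(j := 2))" by simp
  moreover have "\<not> ?P (y(j := 0))" for y
  proof
    assume "?P (y(j := 0))"
    then have "(y(j := 0)) j = 2" using Pos unfolding one_unsigned_two_def by blast
    then show False by simp
  qed
  ultimately show "\<not> decreasing_in 3 n j ?P"
    by (intro not_decreasing_inI[OF two_marked_in_cfg j, of 0 2]) simp_all
  show "increasing_in 3 n j ?P"
    by (rule increasing_inI) (use Pos in \<open>auto simp: one_unsigned_two_def\<close>)
qed

lemma one_unsigned_two_negative_arc:
  assumes G: "signed_digraph_on n G" and Neg: "G (j, i) = Some Neg"
  shows "\<not> increasing_in 3 n j (one_unsigned_two G i) \<and> decreasing_in 3 n j (one_unsigned_two G i)"
proof
  let ?P = "one_unsigned_two G i"
  from G Neg have j: "j < n" by (auto simp: signed_digraph_on_def)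
  have not_two: "y j \<noteq> 2" if "?P y" for y
    using that Neg unfolding one_unsigned_two_def by blast
  obtain X where X: "X \<subseteq> unsigned_in_neighbors G i" "?P (two_marked n G i X)"
    using ex_two_marked_one_unsigned_two[OF G] by blast
  moreover have "(two_marked n G i X)(j := 0) = two_marked n G i X"
    using X(1) Neg by (intro two_marked_fun_upd_zero) (auto simp: unsigned_in_neighbors_def)
  ultimately have "?P ((two_marked n G i X)(j := 0))" by simp
  moreover have "\<not> ?P (y(j := 2))" for y
    using not_two[of "y(j := 2)"] by auto
  ultimately show "\<not> increasing_in 3 n j ?P"
    by (intro not_increasing_inI[OF two_marked_in_cfg j, of 0 2]) simp_all
  show "decreasing_in 3 n j ?P"
  proof (rule decreasing_inI)
    fix x and r t :: nat
    assume "r < t" "t < 3" and Pt: "?P (x(j := t))"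
    then have "t \<noteq> 2" "r \<noteq> 2" using not_two[OF Pt] by auto
    then have "?P (x(j := r)) = ?P (x(j := t))"
      by (intro one_unsigned_two_cong) simp
    with Pt show "?P (x(j := r))" by simp
  qed
qed

lemma one_unsigned_two_unsigned_arc:
  assumes G: "signed_digraph_on n G" and Unsigned: "G (j, i) = Some Unsigned"
    and not_one: "card (unsigned_in_neighbors G i) \<noteq> 1"
  shows "\<not> increasing_in 3 n j (one_unsigned_two G i) \<and> \<not> decreasing_in 3 n j (one_unsigned_two G i)"
proof -
  let ?U = "unsigned_in_neighbors G i"
  have ju: "j \<in> ?U" using Unsigned by (simp add: unsigned_in_neighbors_def)
  with G have j: "j < n" by (rule unsigned_in_neighbors_less)
  from ju have nonempty: "?U \<noteq> {}" by blast
  from ju not_one have "?U \<noteq> {j}" by auto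
  with ju obtain u where u: "u \<in> ?U" "u \<noteq> j" by blast
  have upd0: "(two_marked n G i Y)(j := 0) = two_marked n G i Y" if "j \<notin> Y" for Y
    using that Unsigned by (simp add: two_marked_fun_upd_zero)
  note upd2 = two_marked_fun_upd_two[OF G ju]
  note marked = one_unsigned_two_two_marked[OF G]
  have "\<not> decreasing_in 3 n j (one_unsigned_two G i)"
    by (rule not_decreasing_inI[OF two_marked_in_cfg[of n G i "{}"] j, of 0 2])
      (use ju nonempty in \<open>simp_all add: upd0 upd2 marked\<close>)
  moreover have "\<not> increasing_in 3 n j (one_unsigned_two G i)"
    by (rule not_increasing_inI[OF two_marked_in_cfg[of n G i "{u}"] j, of 0 2])
      (use u ju nonempty in \<open>simp_all add: upd0 upd2 marked\<close>)
  ultimately show ?thesis by blast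
qed

lemma arc_sign_one_unsigned_two:
  assumes G: "signed_digraph_on n G"
    and not_one: "card (unsigned_in_neighbors G i) \<noteq> 1"
  shows "arc_sign (increasing_in 3 n j (one_unsigned_two G i)) (decreasing_in 3 n j (one_unsigned_two G i))
           = G (j, i)"
proof (cases "G (j, i)")
  case None
  then have "one_unsigned_two G i (x(j := t)) = one_unsigned_two G i x" for x t
    by (intro one_unsigned_two_cong) auto
  then have "increasing_in 3 n j (one_unsigned_two G i)" "decreasing_in 3 n j (one_unsigned_two G i)"
    by (auto intro!: increasing_inI decreasing_inI)
  with None show ?thesis by (simp add: arc_sign_def)
next
  case (Some s)
  then show ?thesis
    using one_unsigned_two_positive_arc[OF G] one_unsigned_two_negative_arc[OF G]
      one_unsigned_two_unsigned_arc[OF G _ not_one]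
    by (cases s) (simp_all add: arc_sign_def)
qed

lemma nilpotent_network_if_no_single_unsigned_in_neighbor:
  assumes G: "signed_digraph_on n G"
    and not_one: "\<forall>i<n. card (unsigned_in_neighbors G i) \<noteq> 1"
  shows "\<exists>f. is_function_over 3 n f \<and> interaction_graph 3 n f = G \<and> nilpotent_class_le 3 n f 2"
proof (intro exI conjI)
  let ?f = "indicator_map n 1 (one_unsigned_two G)"
  show "is_function_over 3 n ?f"
    by (simp add: indicator_map_function_over)
  show "interaction_graph 3 n ?f = G"
    using not_one
    by (simp add: interaction_graph_indicator_map_eqI[OF G] arc_sign_one_unsigned_two[OF G])
  have "?f (?f x) = ?f (\<lambda>_. 0)" for x
    by (intro indicator_map_cong one_unsigned_two_cong) (simp add: indicator_map_neq)
  then show "nilpotent_class_le 3 n ?f 2"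
    by (rule nilpotent_class_le_2I)
qed

theorem proposition6:
  fixes n :: nat and G :: "nat \<times> nat \<Rightarrow> sign option"
  assumes "signed_digraph_on n G"
    and "(\<forall>i<n. card (unsigned_in_neighbors G i) \<noteq> 1)
         \<or> (\<forall>i<n. card (unsigned_in_neighbors G i) \<ge> 1)"
  shows "\<exists>f. is_function_over 3 n f \<and> interaction_graph 3 n f = G
             \<and> nilpotent_class_le 3 n f 2"
  using assms(2)
proof
  assume "\<forall>i<n. card (unsigned_in_neighbors G i) \<noteq> 1"
  with assms(1) show ?thesis by (rule nilpotent_network_if_no_single_unsigned_in_neighbor)
next
  assume "\<forall>i<n. card (unsigned_in_neighbors G i) \<ge> 1"
  then have "\<forall>i<n. unsigned_in_neighbors G i \<noteq> {}" by fastforce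
  with assms(1) show ?thesis by (rule nilpotent_network_if_unsigned_in_neighbors)
qed

end
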